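(* Let $n$ be even and $k\ge 2$. Let $f(x)=a_0(x)+2a_1(x)+\cdots+2^{k-1}a_{k-1}(x)$ from $\mathbb{V}_n$ to $\mathbb{Z}_{2^k}$, where $a_0,\ldots,a_{k-2}$ are linearly independent Boolean functions. Then $f$ is gbent if and only if $\mathcal{A}=a_{k-1}\oplus\langle a_0,\ldots,a_{k-2}\rangle$ is a $(k-1)$-dimensional affine space of bent functions such that for every $g_i,g_j,g_l\in\mathcal{A}$ the function $g_ig_j\oplus g_ig_l\oplus g_jg_l$ is bent. (In particular, whether $f$ is gbent depends only on the affine space $\mathcal{A}$, not on the choice of basis $a_0,\ldots,a_{k-2}$ of its direction space or on the coset representative $a_{k-1}$.)
   Context: $\mathbb{V}_n$ is an $n$-dimensional $\mathbb{F}_2$-vector space with inner product $u\cdot x$. A Boolean $g$ is bent if $|\sum_x(-1)^{g(x)\oplus u\cdot x}|=2^{n/2}$ for all $u$. $f$ is gbent if $|\sum_x\zeta_{2^k}^{f(x)}(-1)^{u\cdot x}|=2^{n/2}$ for all $u$, $\zeta_{2^k}=e^{2\pi i/2^k}$. $\langle\cdot\rangle$ is $\mathbb{F}_2$-span and $a\oplus L=\{a\oplus h:h\in L\}$. *)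

theory Defs
  imports "HOL-Analysis.Analysis"
begin

definition Vn :: "nat \<Rightarrow> (nat \<Rightarrow> bool) set" where
  "Vn n = {x. \<forall>i. n \<le> i \<longrightarrow> \<not> x i}"

definition ip :: "nat \<Rightarrow> (nat \<Rightarrow> bool) \<Rightarrow> (nat \<Rightarrow> bool) \<Rightarrow> bool" where
  "ip n u x = odd (card {i. i < n \<and> u i \<and> x i})"

definition sgn_b :: "bool \<Rightarrow> real" where
  "sgn_b b = (if b then -1 else 1)"

definition bent :: "nat \<Rightarrow> ((nat \<Rightarrow> bool) \<Rightarrow> bool) \<Rightarrow> bool" where
  "bent n g \<longleftrightarrow> (\<forall>u\<in>Vn n.
     \<bar>\<Sum>x\<in>Vn n. sgn_b (g x \<noteq> ip n u x)\<bar> = 2 powr (real n / 2))"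

text \<open>Generalized bent: f : V_n -> Z_{2^k}, values represented by naturals (taken mod 2^k
  implicitly since zeta^(2^k) = 1).\<close>
definition gbent :: "nat \<Rightarrow> nat \<Rightarrow> ((nat \<Rightarrow> bool) \<Rightarrow> nat) \<Rightarrow> bool" where
  "gbent n k f \<longleftrightarrow> (\<forall>u\<in>Vn n.
     cmod (\<Sum>x\<in>Vn n. cis (2 * pi * real (f x) / 2 ^ k) * complex_of_real (sgn_b (ip n u x)))
       = 2 powr (real n / 2))"

definition xor_sum :: "(nat \<Rightarrow> (nat \<Rightarrow> bool) \<Rightarrow> bool) \<Rightarrow> nat set \<Rightarrow> (nat \<Rightarrow> bool) \<Rightarrow> bool" where
  "xor_sum a S x = odd (card {i\<in>S. a i x})"

definition lin_indep_bool :: "nat \<Rightarrow> (nat \<Rightarrow> (nat \<Rightarrow> bool) \<Rightarrow> bool) \<Rightarrow> nat \<Rightarrow> bool" where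
  "lin_indep_bool n a m \<longleftrightarrow>
     (\<forall>S. S \<subseteq> {..<m} \<longrightarrow> (\<forall>x\<in>Vn n. \<not> xor_sum a S x) \<longrightarrow> S = {})"

definition aff_space :: "((nat \<Rightarrow> bool) \<Rightarrow> bool) \<Rightarrow> (nat \<Rightarrow> (nat \<Rightarrow> bool) \<Rightarrow> bool) \<Rightarrow> nat
    \<Rightarrow> ((nat \<Rightarrow> bool) \<Rightarrow> bool) set" where
  "aff_space c a m = {(\<lambda>x. c x \<noteq> xor_sum a S x) | S. S \<subseteq> {..<m}}"

end

theory Submission
  imports Defs "HOL-Computational_Algebra.Polynomial"
begin

text \<open>Let \<open>N = 2^m\<close> with \<open>m = k - 1\<close>, let \<open>\<zeta> = exp(\<pi> i / N)\<close> and write \<open>f = \<rho> + N a_m\<close>, where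
  \<open>\<rho>(x) < N\<close> has the binary digits \<open>a_0(x), \<dots>, a_(m-1)(x)\<close>. Grouping \<open>x\<close> by the value of \<open>\<rho>\<close>,
  the generalized Walsh transform of \<open>f\<close> is \<open>H(u) = \<Sum>_r D_r(u) \<zeta>^r\<close> with integers \<open>D_r(u)\<close>,
  while each Boolean function \<open>a_m \<oplus> h(\<rho>)\<close> has Walsh transform \<open>\<Sum>_r (-1)^h(r) D_r(u)\<close>. The
  members of \<open>\<A>\<close> are these functions for linear \<open>h\<close>, and majorities of them are again of this form.

  Since \<open>X^N + 1\<close> is irreducible (Eisenstein at 2 after \<open>X \<mapsto> 1 - X\<close>), the \<open>\<zeta>^r\<close> with \<open>r < N\<close> are
  linearly independent, and \<open>|H(u)|^2 = 2^n\<close> forces \<open>H(u) = \<plusminus>2^(n/2) \<zeta>^r\<close>: comparing valuations at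
  \<open>\<pi> = 1 - \<zeta>\<close>, whose \<open>N\<close>-th power is 2 times a unit, splits off \<open>2^(n/2)\<close>, and an element of
  \<open>\<int>[\<zeta>]\<close> whose conjugates all have modulus one has an integer coefficient vector of norm one
  (Parseval over the conjugates). So \<open>f\<close> is gbent iff for every \<open>u\<close> exactly one \<open>D_r(u)\<close> is
  nonzero, equal to \<open>\<plusminus>2^(n/2)\<close>; then every \<open>a_m \<oplus> h(\<rho>)\<close> is bent. Conversely, bentness of the
  majority of the members of \<open>\<A>\<close> indexed by \<open>S\<close>, \<open>{i}\<close> and \<open>\<emptyset>\<close> makes the sign of the Walsh value
  at \<open>S \<union> {i}\<close> the product of the other three signs. Hence the signs form a character
  \<open>S \<mapsto> \<plusminus>(-1)^(S\<cdot>\<beta>)\<close>, and Walsh-Hadamard inversion gives \<open>D_r(u) = \<plusminus>2^(n/2) [r = \<beta>]\<close>.\<close>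

definition cpoly :: "int poly \<Rightarrow> complex poly" where
  "cpoly p = map_poly of_int p"

lemma coeff_cpoly [simp]: "coeff (cpoly p) i = of_int (coeff p i)"
  by (simp add: cpoly_def coeff_map_poly)

lemma cpoly_0 [simp]: "cpoly 0 = 0"
  and cpoly_1 [simp]: "cpoly 1 = 1"
  and cpoly_pCons [simp]: "cpoly (pCons c p) = pCons (of_int c) (cpoly p)"
  and cpoly_add [simp]: "cpoly (p + q) = cpoly p + cpoly q"
  and cpoly_diff [simp]: "cpoly (p - q) = cpoly p - cpoly q"
  and cpoly_uminus [simp]: "cpoly (- p) = - cpoly p"
  and cpoly_mult [simp]: "cpoly (p * q) = cpoly p * cpoly q"
  and cpoly_smult [simp]: "cpoly (smult c p) = smult (of_int c) (cpoly p)"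
  and cpoly_monom [simp]: "cpoly (monom c n) = monom (of_int c) n"
  by (rule poly_eqI; simp add: coeff_pCons coeff_mult coeff_1 coeff_monom split: nat.splits)+

lemma cpoly_power [simp]: "cpoly (p ^ n) = cpoly p ^ n"
  by (induction n) simp_all

lemma poly_cpoly_pcompose: "poly (cpoly (pcompose p q)) w = poly (cpoly p) (poly (cpoly q) w)"
  by (induction p) (simp_all add: pcompose_pCons)

lemma cnj_poly_cpoly: "cnj (poly (cpoly p) w) = poly (cpoly p) (cnj w)"
proof -
  have "map_poly cnj (cpoly p) = cpoly p"
    by (rule poly_eqI) (simp add: coeff_map_poly)
  then show ?thesis
    by (simp add: poly_cnj)
qed

lemma poly_cpoly_as_sum:
  assumes "degree p < d"
  shows "poly (cpoly p) w = (\<Sum>r<d. of_int (coeff p r) * w ^ r)"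
proof -
  have "poly (cpoly p) w = (\<Sum>i\<le>degree (cpoly p). coeff (cpoly p) i * w ^ i)"
    by (rule poly_altdef)
  also have "\<dots> = (\<Sum>i<d. coeff (cpoly p) i * w ^ i)"
    using assms by (intro sum.mono_neutral_left) (auto simp: cpoly_def coeff_eq_0 degree_map_poly)
  finally show ?thesis
    by simp
qed

lemma not_dvd_coeff_mult_first_indices:
  fixes G H :: "int poly" and q :: int
  assumes "prime q"
    and "\<not> q dvd coeff G i0" "\<And>i. i < i0 \<Longrightarrow> q dvd coeff G i"
    and "\<not> q dvd coeff H j0" "\<And>j. j < j0 \<Longrightarrow> q dvd coeff H j"
  shows "\<not> q dvd coeff (G * H) (i0 + j0)"
proof -
  have "coeff (G * H) (i0 + j0) = coeff G i0 * coeff H j0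
      + (\<Sum>i\<in>{..i0+j0} - {i0}. coeff G i * coeff H (i0 + j0 - i))"
    unfolding coeff_mult by (subst sum.remove[of _ i0]) auto
  moreover have "q dvd (\<Sum>i\<in>{..i0+j0} - {i0}. coeff G i * coeff H (i0 + j0 - i))"
  proof (rule dvd_sum)
    fix i assume "i \<in> {..i0+j0} - {i0}"
    then have "i < i0 \<or> i0 + j0 - i < j0"
      by auto
    then show "q dvd coeff G i * coeff H (i0 + j0 - i)"
      using assms(3,5) by auto
  qed
  moreover have "\<not> q dvd coeff G i0 * coeff H j0"
    using assms(1,2,4) by (simp add: prime_dvd_mult_iff)
  ultimately show ?thesis
    by (simp add: dvd_add_left_iff)
qed

lemma eisenstein_criterion:
  fixes G H :: "int poly" and q :: int
  assumes "prime q"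
    and "\<not> q\<^sup>2 dvd coeff (G * H) 0"
    and "\<And>i. i < degree (G * H) \<Longrightarrow> q dvd coeff (G * H) i"
    and "\<not> q dvd lead_coeff (G * H)"
  shows "degree G = 0 \<or> degree H = 0"
proof (rule ccontr)
  assume nonconst: "\<not> (degree G = 0 \<or> degree H = 0)"
  then have "G \<noteq> 0" "H \<noteq> 0"
    by auto
  then have deg: "degree (G * H) = degree G + degree H"
    and lead: "lead_coeff (G * H) = lead_coeff G * lead_coeff H"
    by (simp_all add: degree_mult_eq coeff_mult_degree_sum)
  define i0 where "i0 = (LEAST i. \<not> q dvd coeff G i)"
  define j0 where "j0 = (LEAST j. \<not> q dvd coeff H j)"
  have G_lead: "\<not> q dvd lead_coeff G" and H_lead: "\<not> q dvd lead_coeff H"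
    using assms(4) unfolding lead by auto
  have i0: "\<not> q dvd coeff G i0" "i0 \<le> degree G"
    unfolding i0_def by (rule LeastI[of _ "degree G"], rule G_lead) (rule Least_le, rule G_lead)
  have below_i0: "q dvd coeff G i" if "i < i0" for i
    using not_less_Least[OF that[unfolded i0_def]] by simp
  have j0: "\<not> q dvd coeff H j0" "j0 \<le> degree H"
    unfolding j0_def by (rule LeastI[of _ "degree H"], rule H_lead) (rule Least_le, rule H_lead)
  have below_j0: "q dvd coeff H j" if "j < j0" for j
    using not_less_Least[OF that[unfolded j0_def]] by simp
  have "\<not> q dvd coeff (G * H) (i0 + j0)"
    using assms(1) i0(1) below_i0 j0(1) below_j0 by (rule not_dvd_coeff_mult_first_indices)
  then have "\<not> i0 + j0 < degree G + degree H"
    using assms(3) deg by metis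
  then have "i0 = degree G" "j0 = degree H"
    using i0(2) j0(2) by linarith+
  then have "q dvd coeff G 0" "q dvd coeff H 0"
    using below_i0 below_j0 nonconst by auto
  then have "q\<^sup>2 dvd coeff G 0 * coeff H 0"
    by (simp add: power2_eq_square mult_dvd_mono)
  then show False
    using assms(2) by (simp add: coeff_mult)
qed

lemma one_minus_X_power_two_power:
  "\<exists>E::int poly. [:1, -1:] ^ (2 ^ j) = 1 + monom 1 (2 ^ j) + smult 2 E"
proof (induction j)
  case 0
  have "[:1, -1:] = (1::int poly) + monom 1 1 + smult 2 [:0, -1:]"
    by (rule poly_eqI) (simp add: coeff_pCons coeff_monom coeff_1 split: nat.splits)
  then show ?case
    by (simp only: power_0 power_one_right) blast
next
  case (Suc j)
  then obtain E where E: "[:1, -1:] ^ (2 ^ j) = (1::int poly) + monom 1 (2 ^ j) + smult 2 E"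
    by blast
  define X :: "int poly" where "X = monom 1 (2 ^ j)"
  have "([:1, -1:]::int poly) ^ (2 ^ Suc j) = ([:1, -1:] ^ (2 ^ j))\<^sup>2"
    by (simp add: power_mult[symmetric] mult.commute)
  also have "\<dots> = 1 + X * X + smult 2 (X + smult 2 (E + X * E + E * E))"
    unfolding E X_def[symmetric] by (simp only: numeral_mult_conv_smult[symmetric]) algebra
  also have "X * X = monom 1 (2 ^ Suc j)"
    by (simp add: X_def mult_monom mult_2)
  finally show ?case
    by blast
qed

lemma pcompose_power_left: "pcompose (p ^ n) q = pcompose p q ^ n"
  by (induction n) (simp_all add: pcompose_1 pcompose_mult)

lemma sum_squares_eq_1_int:
  fixes b :: "'a \<Rightarrow> int"
  assumes "finite A" and "(\<Sum>r\<in>A. (b r)\<^sup>2) = 1"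
  obtains r0 where "r0 \<in> A" "b r0 = 1 \<or> b r0 = -1" "\<And>r. r \<in> A \<Longrightarrow> r \<noteq> r0 \<Longrightarrow> b r = 0"
proof -
  have "\<exists>r0\<in>A. b r0 \<noteq> 0"
  proof (rule ccontr)
    assume "\<not> (\<exists>r0\<in>A. b r0 \<noteq> 0)"
    then have "(\<Sum>r\<in>A. (b r)\<^sup>2) = 0"
      by simp
    then show False
      using assms(2) by simp
  qed
  then obtain r0 where r0: "r0 \<in> A" "b r0 \<noteq> 0"
    by blast
  have split: "(b r0)\<^sup>2 + (\<Sum>r\<in>A - {r0}. (b r)\<^sup>2) = 1"
    using assms r0(1) by (simp add: sum.remove)
  moreover have "(\<Sum>r\<in>A - {r0}. (b r)\<^sup>2) \<ge> 0" and "(b r0)\<^sup>2 > 0"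
    using r0(2) by (simp_all add: sum_nonneg)
  ultimately have "(b r0)\<^sup>2 = 1" and rest: "(\<Sum>r\<in>A - {r0}. (b r)\<^sup>2) = 0"
    by linarith+
  then have "b r0 = 1 \<or> b r0 = -1"
    by (simp add: power2_eq_1_iff)
  moreover have "b r = 0" if "r \<in> A" "r \<noteq> r0" for r
    using rest assms(1) that by (subst (asm) sum_nonneg_eq_0_iff) auto
  ultimately show ?thesis
    using that r0(1) by blast
qed

section \<open>The ring \<open>\<int>[\<zeta>]\<close> for a primitive \<open>2\<^sup>m\<^sup>+\<^sup>1\<close>-th root of unity \<open>\<zeta>\<close>\<close>

locale two_power_cyclotomic =
  fixes m :: nat
begin

definition N :: nat where "N = 2 ^ m"

definition \<zeta> :: complex where "\<zeta> = cis (pi / 2 ^ m)"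

definition \<Phi> :: "int poly" where "\<Phi> = monom 1 N + 1"

lemma N_pos: "0 < N"
  by (simp add: N_def)

lemma zeta_power_N: "\<zeta> ^ N = -1"
proof -
  have "\<zeta> ^ N = cis (real N * (pi / 2 ^ m))"
    unfolding \<zeta>_def by (rule Complex.DeMoivre)
  then show ?thesis
    by (simp add: N_def)
qed

lemma zeta_power_eq_1_iff: "\<zeta> ^ e = 1 \<longleftrightarrow> 2 * N dvd e"
proof
  assume "2 * N dvd e"
  then obtain t where "e = 2 * N * t"
    by blast
  then have "\<zeta> ^ e = ((\<zeta> ^ N) ^ 2) ^ t"
    by (simp flip: power_mult add: mult_ac)
  then show "\<zeta> ^ e = 1"
    by (simp add: zeta_power_N)
next
  assume "\<zeta> ^ e = 1"
  moreover have "\<zeta> ^ e = cis (real e * (pi / 2 ^ m))"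
    unfolding \<zeta>_def by (rule Complex.DeMoivre)
  ultimately have "cos (real e * (pi / 2 ^ m)) = 1"
    by (metis cis.sel(1) one_complex.sel(1))
  then obtain t :: int where "real e * (pi / 2 ^ m) = t * 2 * pi"
    by (auto simp: cos_one_2pi_int)
  then have "real e = real_of_int (t * 2 * 2 ^ m)"
    by (simp add: field_simps)
  then have "int e = t * 2 * 2 ^ m"
    by (metis of_int_eq_iff of_int_of_nat_eq)
  then have "int e = int (2 * N) * t"
    by (simp add: N_def)
  then show "2 * N dvd e"
    by (metis dvd_triv_left of_nat_dvd_iff)
qed

lemma norm_zeta [simp]: "cmod \<zeta> = 1"
  by (simp add: \<zeta>_def)

lemma zeta_cnj_zeta: "\<zeta> * cnj \<zeta> = 1"
  using complex_norm_square[of \<zeta>] by simp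

lemma cnj_zeta: "cnj \<zeta> = \<zeta> ^ (2 * N - 1)"
proof -
  have "\<zeta> * \<zeta> ^ (2 * N - 1) = 1"
    using N_pos zeta_power_eq_1_iff[of "2 * N"] by (simp flip: power_Suc)
  then show ?thesis
    using zeta_cnj_zeta by (metis inverse_unique)
qed

lemma degree_Phi: "degree \<Phi> = N"
  using N_pos by (simp add: \<Phi>_def degree_add_eq_left degree_monom_eq)

lemma lead_coeff_Phi: "lead_coeff \<Phi> = 1"
  using N_pos unfolding degree_Phi by (simp add: \<Phi>_def coeff_monom)

lemma poly_Phi_1: "poly \<Phi> 1 = 2"
  by (simp add: \<Phi>_def poly_monom)

lemma poly_Phi_eq_0: "w ^ N = -1 \<Longrightarrow> poly (cpoly \<Phi>) w = 0"
  by (simp add: \<Phi>_def poly_monom)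

lemma content_Phi: "content \<Phi> = 1"
proof -
  have "content \<Phi> dvd coeff \<Phi> N"
    by (rule content_dvd_coeff)
  then have "is_unit (content \<Phi>)"
    using N_pos by (simp add: \<Phi>_def)
  then show ?thesis
    by (metis normalize_content is_unit_normalize)
qed

lemma Phi_shifted:
  obtains E where "pcompose \<Phi> [:1, -1:] = 2 + monom 1 N + smult 2 E" "coeff E 0 = 0"
proof -
  obtain E where E: "[:1, -1:] ^ N = (1::int poly) + monom 1 N + smult 2 E"
    using one_minus_X_power_two_power[of m] by (auto simp: N_def)
  have "pcompose (monom (1::int) N) [:1, -1:] = [:1, -1:] ^ N"
    by (simp add: monom_altdef pcompose_pCons pcompose_power_left)
  then have shifted: "pcompose \<Phi> [:1, -1:] = 2 + monom 1 N + smult 2 E"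
    by (simp add: \<Phi>_def pcompose_add pcompose_1 E)
  have "poly (pcompose \<Phi> [:1, -1:]) 0 = 2"
    by (simp add: poly_pcompose poly_Phi_1)
  then have "coeff E 0 = 0"
    using N_pos by (simp add: shifted poly_0_coeff_0 poly_monom numeral_poly)
  with shifted show ?thesis
    using that by blast
qed

lemma Phi_irreducible:
  assumes "\<Phi> = G * H"
  shows "degree G = 0 \<or> degree H = 0"
proof -
  obtain E where E: "pcompose \<Phi> [:1, -1:] = 2 + monom 1 N + smult 2 E" "coeff E 0 = 0"
    using Phi_shifted by blast
  define P where "P = pcompose \<Phi> [:1, -1:]"
  have PGH: "P = pcompose G [:1, -1:] * pcompose H [:1, -1:]"
    by (simp add: P_def assms pcompose_mult)
  have deg: "degree P = N"
    by (simp add: P_def degree_pcompose degree_Phi)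
  have coeff_P: "coeff P i = (if i = 0 then 2 else 0) + (if i = N then 1 else 0) + 2 * coeff E i" for i
    using N_pos by (simp add: P_def E(1) coeff_monom numeral_poly coeff_pCons split: nat.splits)
  have "degree (pcompose G [:1, -1:]) = 0 \<or> degree (pcompose H [:1, -1:]) = 0"
  proof (rule eisenstein_criterion[of 2])
    show "\<not> 2\<^sup>2 dvd coeff (pcompose G [:1, -1:] * pcompose H [:1, -1:]) 0"
      using N_pos coeff_P[of 0] E(2) by (simp add: PGH[symmetric])
  qed (use N_pos coeff_P in \<open>auto simp: PGH[symmetric] deg\<close>)
  then show ?thesis
    by (simp add: degree_pcompose)
qed

lemma Phi_smult_factor:
  assumes "c \<noteq> 0" and "smult c \<Phi> = p * A"
  shows "degree p = 0 \<or> degree A = 0"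
proof -
  have "primitive_part \<Phi> = \<Phi>"
    using content_times_primitive_part[of \<Phi>] content_Phi by simp
  then have "smult (sgn c) \<Phi> = primitive_part p * primitive_part A"
    using arg_cong[OF assms(2), of primitive_part] by (simp add: primitive_part_smult primitive_part_mult)
  then have "smult (sgn c) (smult (sgn c) \<Phi>) = smult (sgn c) (primitive_part p) * primitive_part A"
    by simp
  moreover have "sgn c * sgn c = 1"
    using assms(1) by (simp add: sgn_mult_self_eq)
  ultimately have "\<Phi> = smult (sgn c) (primitive_part p) * primitive_part A"
    by (simp add: smult_smult)
  then have "degree (smult (sgn c) (primitive_part p)) = 0 \<or> degree (primitive_part A) = 0"
    by (rule Phi_irreducible)
  then show ?thesis
    using assms(1) by (simp add: sgn_0_0)
qed

lemma degree_ge_N_of_root: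
  assumes "p \<noteq> 0" and "poly (cpoly p) \<zeta> = 0"
  shows "N \<le> degree p"
  using assms
proof (induction "degree p" arbitrary: p rule: less_induct)
  case less
  show ?case
  proof (rule ccontr)
    assume small: "\<not> N \<le> degree p"
    have "degree p \<noteq> 0"
    proof
      assume "degree p = 0"
      then obtain c where "p = [:c:]"
        by (rule degree_eq_zeroE)
      then show False
        using less.prems by simp
    qed
    obtain A R where AR: "pseudo_divmod \<Phi> p = (A, R)"
      by (cases "pseudo_divmod \<Phi> p")
    define c where "c = lead_coeff p ^ (Suc (degree \<Phi>) - degree p)"
    have "c \<noteq> 0"
      using less.prems by (simp add: c_def)
    have div: "smult c \<Phi> = p * A + R" and R: "R = 0 \<or> degree R < degree p"
      using pseudo_divmod[OF less.prems(1) AR] by (simp_all add: c_def)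
    have "poly (cpoly R) \<zeta> = 0"
      using arg_cong[OF div, of "\<lambda>q. poly (cpoly q) \<zeta>"] less.prems(2)
      by (simp add: poly_Phi_eq_0 zeta_power_N)
    then have "R = 0"
      using R less.hyps small by fastforce
    then have "degree A = 0"
      using Phi_smult_factor[OF \<open>c \<noteq> 0\<close>, of p A] div \<open>degree p \<noteq> 0\<close> by simp
    moreover have "A \<noteq> 0"
      using div \<open>R = 0\<close> \<open>c \<noteq> 0\<close> degree_Phi N_pos by auto
    ultimately have "degree (smult c \<Phi>) = degree p"
      using div \<open>R = 0\<close> less.prems(1) by (simp add: degree_mult_eq)
    then show False
      using small \<open>c \<noteq> 0\<close> by (simp add: degree_Phi)
  qed
qed

lemma eq_0_of_root_of_low_degree: "degree p < N \<Longrightarrow> poly (cpoly p) \<zeta> = 0 \<Longrightarrow> p = 0"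
  using degree_ge_N_of_root by fastforce

lemma Phi_division: obtains q r where "p = \<Phi> * q + r" "degree r < N"
proof -
  obtain q r where qr: "pseudo_divmod p \<Phi> = (q, r)"
    by (cases "pseudo_divmod p \<Phi>")
  have "\<Phi> \<noteq> 0"
    using degree_Phi N_pos by auto
  from pseudo_divmod[OF this qr] have "p = \<Phi> * q + r" "r = 0 \<or> degree r < N"
    using lead_coeff_Phi by (simp_all add: degree_Phi)
  then show ?thesis
    using that N_pos by fastforce
qed

lemma Phi_dvd_of_root:
  assumes "poly (cpoly p) \<zeta> = 0"
  shows "\<Phi> dvd p"
proof -
  obtain q r where qr: "p = \<Phi> * q + r" "degree r < N"
    using Phi_division by blast
  have "poly (cpoly r) \<zeta> = 0"
    using assms by (simp add: qr poly_Phi_eq_0 zeta_power_N)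
  then have "r = 0"
    using eq_0_of_root_of_low_degree qr(2) by blast
  then show ?thesis
    by (simp add: qr(1))
qed

lemma root_at_all_conjugates:
  "poly (cpoly p) \<zeta> = 0 \<Longrightarrow> w ^ N = -1 \<Longrightarrow> poly (cpoly p) w = 0"
  using Phi_dvd_of_root poly_Phi_eq_0 by fastforce

definition cyc_ints :: "complex set" where
  "cyc_ints = {poly (cpoly p) \<zeta> | p. True}"

text \<open>Not divisible by \<open>\<pi> = 1 - \<zeta>\<close>: the residue map \<open>\<int>[\<zeta>] \<rightarrow> \<int>[\<zeta>]/(\<pi>) = \<bbbF>\<^sub>2\<close> sends \<open>p(\<zeta>)\<close>
  to the parity of \<open>p(1)\<close>.\<close>
definition pi_free :: "complex \<Rightarrow> bool" where
  "pi_free \<alpha> \<longleftrightarrow> (\<exists>p. \<alpha> = poly (cpoly p) \<zeta> \<and> odd (poly p 1))"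

definition \<pi> :: complex where "\<pi> = 1 - \<zeta>"

lemma cyc_intsI: "poly (cpoly p) \<zeta> \<in> cyc_ints"
  by (auto simp: cyc_ints_def)

lemma cyc_intsE:
  assumes "\<alpha> \<in> cyc_ints"
  obtains p where "\<alpha> = poly (cpoly p) \<zeta>" "degree p < N"
proof -
  obtain p where p: "\<alpha> = poly (cpoly p) \<zeta>"
    using assms by (auto simp: cyc_ints_def)
  obtain q r where qr: "p = \<Phi> * q + r" "degree r < N"
    using Phi_division by blast
  have "\<alpha> = poly (cpoly r) \<zeta>"
    using p by (simp add: qr poly_Phi_eq_0 zeta_power_N)
  then show ?thesis
    using qr(2) that by blast
qed

lemma cyc_ints_add: "\<alpha> \<in> cyc_ints \<Longrightarrow> \<beta> \<in> cyc_ints \<Longrightarrow> \<alpha> + \<beta> \<in> cyc_ints"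
  and cyc_ints_diff: "\<alpha> \<in> cyc_ints \<Longrightarrow> \<beta> \<in> cyc_ints \<Longrightarrow> \<alpha> - \<beta> \<in> cyc_ints"
  and cyc_ints_mult: "\<alpha> \<in> cyc_ints \<Longrightarrow> \<beta> \<in> cyc_ints \<Longrightarrow> \<alpha> * \<beta> \<in> cyc_ints"
  unfolding cyc_ints_def
  by (smt (verit) cpoly_add cpoly_diff cpoly_mult mem_Collect_eq poly_add poly_diff poly_mult)+

lemma cyc_ints_of_int: "of_int c \<in> cyc_ints"
  using cyc_intsI[of "[:c:]"] by simp

lemma cyc_ints_zeta: "\<zeta> \<in> cyc_ints"
  using cyc_intsI[of "[:0, 1:]"] by simp

lemma cyc_ints_power: "\<alpha> \<in> cyc_ints \<Longrightarrow> \<alpha> ^ n \<in> cyc_ints"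
  using cyc_ints_of_int[of 1] by (induction n) (simp_all add: cyc_ints_mult)

lemma cyc_ints_sum: "(\<And>i. i \<in> I \<Longrightarrow> f i \<in> cyc_ints) \<Longrightarrow> sum f I \<in> cyc_ints"
  using cyc_ints_of_int[of 0] by (induction I rule: infinite_finite_induct) (simp_all add: cyc_ints_add)

lemma cnj_poly_cpoly_zeta: "cnj (poly (cpoly p) \<zeta>) = poly (cpoly (pcompose p (monom 1 (2 * N - 1)))) \<zeta>"
  by (simp add: cnj_poly_cpoly cnj_zeta poly_cpoly_pcompose poly_monom)

lemma parity_at_1_well_defined:
  assumes "poly (cpoly p) \<zeta> = poly (cpoly q) \<zeta>"
  shows "even (poly p 1 - poly q 1)"
proof -
  have "poly (cpoly (p - q)) \<zeta> = 0"
    using assms by simp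
  then obtain s where "p - q = \<Phi> * s"
    using Phi_dvd_of_root by blast
  then have "poly p 1 - poly q 1 = 2 * poly s 1"
    by (metis poly_Phi_1 poly_diff poly_mult)
  then show ?thesis
    by simp
qed

lemma pi_free_iff_odd:
  assumes "\<alpha> = poly (cpoly q) \<zeta>"
  shows "pi_free \<alpha> \<longleftrightarrow> odd (poly q 1)"
proof
  assume "pi_free \<alpha>"
  then obtain p where "\<alpha> = poly (cpoly p) \<zeta>" "odd (poly p 1)"
    unfolding pi_free_def by blast
  with assms show "odd (poly q 1)"
    using parity_at_1_well_defined[of p q] by auto
qed (use assms pi_free_def in blast)

lemma pi_free_in_cyc_ints: "pi_free \<alpha> \<Longrightarrow> \<alpha> \<in> cyc_ints"
  unfolding pi_free_def cyc_ints_def by blast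

lemma pi_free_1: "pi_free 1"
  using pi_free_iff_odd[of 1 1] by simp

lemma pi_free_mult: "pi_free \<alpha> \<Longrightarrow> pi_free \<beta> \<Longrightarrow> pi_free (\<alpha> * \<beta>)"
proof -
  assume "pi_free \<alpha>" "pi_free \<beta>"
  then obtain p q where "\<alpha> = poly (cpoly p) \<zeta>" "odd (poly p 1)" "\<beta> = poly (cpoly q) \<zeta>" "odd (poly q 1)"
    unfolding pi_free_def by blast
  then have "\<alpha> * \<beta> = poly (cpoly (p * q)) \<zeta>" "odd (poly (p * q) 1)"
    by simp_all
  then show ?thesis
    unfolding pi_free_def by blast
qed

lemma pi_free_power: "pi_free \<alpha> \<Longrightarrow> pi_free (\<alpha> ^ n)"
  by (induction n) (simp_all add: pi_free_1 pi_free_mult)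

lemma pi_free_cnj: "pi_free \<alpha> \<Longrightarrow> pi_free (cnj \<alpha>)"
proof -
  assume "pi_free \<alpha>"
  then obtain p where "\<alpha> = poly (cpoly p) \<zeta>" "odd (poly p 1)"
    unfolding pi_free_def by blast
  moreover have "poly (pcompose p (monom 1 (2 * N - 1))) 1 = poly p 1"
    by (simp add: poly_pcompose poly_monom)
  ultimately show ?thesis
    unfolding pi_free_def using cnj_poly_cpoly_zeta by metis
qed

lemma not_pi_free_pi_multiple: "0 < s \<Longrightarrow> \<gamma> \<in> cyc_ints \<Longrightarrow> \<not> pi_free (\<pi> ^ s * \<gamma>)"
proof -
  assume "0 < s" "\<gamma> \<in> cyc_ints"
  then obtain g where "\<gamma> = poly (cpoly g) \<zeta>"
    by (auto simp: cyc_ints_def)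
  then have "\<pi> ^ s * \<gamma> = poly (cpoly ([:1, -1:] ^ s * g)) \<zeta>"
    by (simp add: \<pi>_def)
  then have "pi_free (\<pi> ^ s * \<gamma>) \<longleftrightarrow> odd (poly ([:1, -1:] ^ s * g) 1)"
    by (rule pi_free_iff_odd)
  then show ?thesis
    using \<open>0 < s\<close> by simp
qed

lemma pi_nonzero: "\<pi> \<noteq> 0"
  using zeta_power_N N_pos by (auto simp: \<pi>_def)

lemma two_eq_pi_times: obtains \<sigma> where "\<sigma> \<in> cyc_ints" "2 = \<pi> * \<sigma>"
proof
  have "1 - \<zeta> ^ N = (1 - \<zeta>) * (\<Sum>i<N. \<zeta> ^ i)"
    by (rule one_diff_power_eq)
  then show "2 = \<pi> * (\<Sum>i<N. \<zeta> ^ i)"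
    by (simp add: zeta_power_N \<pi>_def)
  show "(\<Sum>i<N. \<zeta> ^ i) \<in> cyc_ints"
    by (intro cyc_ints_sum cyc_ints_power cyc_ints_zeta)
qed

lemma pi_dvd_of_not_pi_free:
  assumes "\<alpha> \<in> cyc_ints" and "\<not> pi_free \<alpha>"
  obtains \<alpha>' where "\<alpha>' \<in> cyc_ints" "\<alpha> = \<pi> * \<alpha>'"
proof -
  obtain p where p: "\<alpha> = poly (cpoly p) \<zeta>"
    using assms(1) by (auto simp: cyc_ints_def)
  then obtain t where t: "poly p 1 = 2 * t"
    using assms(2) pi_free_iff_odd by blast
  have "poly (p - [:2 * t:]) 1 = 0"
    using t by simp
  then obtain q where q: "p - [:2 * t:] = [:-1, 1:] * q"
    using poly_eq_0_iff_dvd[of "p - [:2 * t:]" 1] by auto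
  obtain \<sigma> where \<sigma>: "\<sigma> \<in> cyc_ints" "2 = \<pi> * \<sigma>"
    using two_eq_pi_times by blast
  have two: "2 * of_int t = \<pi> * (of_int t * \<sigma>)"
    using \<sigma>(2) by simp
  have "\<alpha> = poly (cpoly (p - [:2 * t:])) \<zeta> + 2 * of_int t"
    by (simp add: p)
  also have "\<dots> = \<pi> * (of_int t * \<sigma> - poly (cpoly q) \<zeta>)"
    unfolding q two by (simp add: \<pi>_def algebra_simps)
  finally have "\<alpha> = \<pi> * (of_int t * \<sigma> - poly (cpoly q) \<zeta>)" .
  moreover have "of_int t * \<sigma> - poly (cpoly q) \<zeta> \<in> cyc_ints"
    by (intro cyc_ints_diff cyc_ints_mult cyc_ints_of_int \<sigma>(1) cyc_intsI)
  ultimately show ?thesis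
    using that by blast
qed

lemma pi_power_N: obtains \<epsilon> where "pi_free \<epsilon>" "\<pi> ^ N = 2 * \<epsilon>"
proof -
  obtain E where E: "[:1, -1:] ^ N = (1::int poly) + monom 1 N + smult 2 E"
    using one_minus_X_power_two_power[of m] by (auto simp: N_def)
  have "\<pi> ^ N = poly (cpoly ([:1, -1:] ^ N)) \<zeta>"
    by (simp add: \<pi>_def)
  then have "\<pi> ^ N = 2 * poly (cpoly E) \<zeta>"
    by (simp add: E poly_monom zeta_power_N)
  moreover have "poly ([:1, -1:] ^ N) (1::int) = 0"
    using N_pos by simp
  then have "poly E 1 = -1"
    using N_pos by (simp add: E poly_monom)
  then have "pi_free (poly (cpoly E) \<zeta>)"
    by (simp add: pi_free_iff_odd)
  ultimately show ?thesis
    using that by blast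
qed

lemma cnj_pi: obtains u where "pi_free u" "cnj \<pi> = \<pi> * u"
proof
  show "cnj \<pi> = \<pi> * (- cnj \<zeta>)"
    using zeta_cnj_zeta by (simp add: \<pi>_def algebra_simps)
  have "- cnj \<zeta> = poly (cpoly (- monom 1 (2 * N - 1))) \<zeta>"
    by (simp add: cnj_zeta poly_monom)
  then have "pi_free (- cnj \<zeta>) \<longleftrightarrow> odd (poly (- monom 1 (2 * N - 1)) (1::int))"
    by (rule pi_free_iff_odd)
  then show "pi_free (- cnj \<zeta>)"
    by (simp add: poly_monom)
qed

lemma eq_0_of_dvd_all_powers_of_two:
  assumes "\<alpha> \<in> cyc_ints" and "\<And>t. \<exists>\<beta>\<in>cyc_ints. \<alpha> = 2 ^ t * \<beta>"
  shows "\<alpha> = 0"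
proof -
  obtain p where p: "\<alpha> = poly (cpoly p) \<zeta>" "degree p < N"
    using assms(1) by (rule cyc_intsE)
  have dvd: "2 ^ t dvd coeff p i" for t i
  proof -
    obtain \<beta> where \<beta>: "\<beta> \<in> cyc_ints" "\<alpha> = 2 ^ t * \<beta>"
      using assms(2) by blast
    obtain q where q: "\<beta> = poly (cpoly q) \<zeta>" "degree q < N"
      using \<beta>(1) by (rule cyc_intsE)
    have "poly (cpoly (p - smult (2 ^ t) q)) \<zeta> = 0"
      using p(1) \<beta>(2) q(1) by simp
    moreover have "degree (p - smult (2 ^ t) q) < N"
      using p(2) q(2) by (intro degree_diff_less) (simp_all add: degree_smult_le le_less_trans)
    ultimately have "p = smult (2 ^ t) q"
      using eq_0_of_root_of_low_degree by fastforce
    then show ?thesis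
      by simp
  qed
  have "coeff p i = 0" for i
  proof (rule ccontr)
    assume "coeff p i \<noteq> 0"
    then have "\<bar>2 ^ nat \<bar>coeff p i\<bar>\<bar> \<le> \<bar>coeff p i\<bar>"
      using dvd by (rule dvd_imp_le_int)
    moreover have "int (nat \<bar>coeff p i\<bar>) < 2 ^ nat \<bar>coeff p i\<bar>"
      by (metis less_exp of_nat_less_iff of_nat_numeral of_nat_power)
    ultimately show False
      by simp
  qed
  then have "p = 0"
    by (simp add: poly_eq_iff)
  then show ?thesis
    by (simp add: p(1))
qed

lemma pi_adic_decomposition:
  assumes "\<alpha> \<in> cyc_ints" and "\<alpha> \<noteq> 0"
  obtains v \<gamma> where "pi_free \<gamma>" "\<alpha> = \<pi> ^ v * \<gamma>"
proof -
  have "\<exists>v \<gamma>. pi_free \<gamma> \<and> \<alpha> = \<pi> ^ v * \<gamma>"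
  proof (rule ccontr)
    assume none: "\<nexists>v \<gamma>. pi_free \<gamma> \<and> \<alpha> = \<pi> ^ v * \<gamma>"
    have pi_powers: "\<exists>\<gamma>\<in>cyc_ints. \<alpha> = \<pi> ^ v * \<gamma>" for v
    proof (induction v)
      case (Suc v)
      then obtain \<gamma> where \<gamma>: "\<gamma> \<in> cyc_ints" "\<alpha> = \<pi> ^ v * \<gamma>"
        by blast
      then obtain \<gamma>' where "\<gamma>' \<in> cyc_ints" "\<gamma> = \<pi> * \<gamma>'"
        using none pi_dvd_of_not_pi_free by blast
      then show ?case
        using \<gamma>(2) by (auto simp: mult_ac)
    qed (use assms(1) in auto)
    obtain \<epsilon> where \<epsilon>: "pi_free \<epsilon>" "\<pi> ^ N = 2 * \<epsilon>"
      using pi_power_N by blast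
    have "\<exists>\<beta>\<in>cyc_ints. \<alpha> = 2 ^ t * \<beta>" for t
    proof -
      obtain \<gamma> where \<gamma>: "\<gamma> \<in> cyc_ints" "\<alpha> = \<pi> ^ (N * t) * \<gamma>"
        using pi_powers by blast
      have "\<pi> ^ (N * t) = 2 ^ t * \<epsilon> ^ t"
        by (simp only: power_mult \<epsilon>(2) power_mult_distrib)
      then have "\<alpha> = 2 ^ t * (\<epsilon> ^ t * \<gamma>)"
        unfolding \<gamma>(2) by (simp only: mult.assoc)
      moreover have "\<epsilon> ^ t * \<gamma> \<in> cyc_ints"
        by (intro cyc_ints_mult cyc_ints_power \<gamma>(1) pi_free_in_cyc_ints \<epsilon>(1))
      ultimately show ?thesis
        by blast
    qed
    then have "\<alpha> = 0"
      by (rule eq_0_of_dvd_all_powers_of_two[OF assms(1)])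
    then show False
      using assms(2) by contradiction
  qed
  then show ?thesis
    using that by blast
qed

lemma pi_power_cancel:
  assumes "pi_free L" and "\<pi> ^ a * L = \<pi> ^ b"
  shows "a = b"
proof (rule ccontr)
  assume "a \<noteq> b"
  then consider "a < b" | "b < a"
    by linarith
  then show False
  proof cases
    case 1
    then have "\<pi> ^ a * L = \<pi> ^ a * (\<pi> ^ (b - a) * 1)"
      using assms(2) by (simp flip: power_add)
    then have "L = \<pi> ^ (b - a) * 1"
      using pi_nonzero by simp
    moreover have "\<not> pi_free (\<pi> ^ (b - a) * 1)"
      using 1 cyc_ints_of_int[of 1] by (intro not_pi_free_pi_multiple) simp_all
    ultimately show False
      using assms(1) by simp
  next
    case 2
    then have "\<pi> ^ b * (\<pi> ^ (a - b) * L) = \<pi> ^ b * 1"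
      using assms(2) by (simp add: mult.assoc[symmetric] flip: power_add)
    then have "\<pi> ^ (a - b) * L = 1"
      using pi_nonzero by simp
    moreover have "\<not> pi_free (\<pi> ^ (a - b) * L)"
      using 2 pi_free_in_cyc_ints[OF assms(1)] by (intro not_pi_free_pi_multiple) simp_all
    ultimately show False
      using pi_free_1 by simp
  qed
qed

lemma N_dvd_conj_exponent_iff:
  assumes "r < N" and "s < N"
  shows "N dvd r + (2 * N - 1) * s \<longleftrightarrow> r = s"
proof -
  have "int (2 * N - 1) = 2 * int N - 1"
    using N_pos by linarith
  then have int_exponent: "int (r + (2 * N - 1) * s) = (int r - int s) + int N * (2 * int s)"
    by (simp only: of_nat_add of_nat_mult) (simp add: algebra_simps)
  have "N dvd r + (2 * N - 1) * s \<longleftrightarrow> int N dvd int (r + (2 * N - 1) * s)"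
    by (simp only: of_nat_dvd_iff)
  also have "\<dots> \<longleftrightarrow> int N dvd int r - int s"
    unfolding int_exponent by (simp add: dvd_add_left_iff)
  also have "\<dots> \<longleftrightarrow> r = s"
  proof
    assume "int N dvd int r - int s"
    moreover have "\<bar>int r - int s\<bar> < int N"
      using assms by linarith
    ultimately show "r = s"
      using dvd_imp_le_int[of "int r - int s" "int N"] by fastforce
  qed simp
  finally show ?thesis .
qed

lemma conjugate_orthogonality:
  assumes "r < N" and "s < N"
  shows "(\<Sum>t<N. (\<zeta> ^ (2 * t + 1)) ^ r * cnj ((\<zeta> ^ (2 * t + 1)) ^ s)) = (if r = s then of_nat N else 0)"
proof -
  define e where "e = r + (2 * N - 1) * s"
  have "(\<zeta> ^ (2 * t + 1)) ^ r * cnj ((\<zeta> ^ (2 * t + 1)) ^ s) = \<zeta> ^ e * (\<zeta> ^ (2 * e)) ^ t" for t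
  proof -
    have "(\<zeta> ^ (2 * t + 1)) ^ r * cnj ((\<zeta> ^ (2 * t + 1)) ^ s)
        = \<zeta> ^ ((2 * t + 1) * r + (2 * N - 1) * ((2 * t + 1) * s))"
      by (simp only: complex_cnj_power cnj_zeta power_mult[symmetric] power_add[symmetric])
    also have "(2 * t + 1) * r + (2 * N - 1) * ((2 * t + 1) * s) = e + 2 * e * t"
      by (simp add: e_def algebra_simps)
    finally show ?thesis
      by (simp add: power_add power_mult)
  qed
  then have "(\<Sum>t<N. (\<zeta> ^ (2 * t + 1)) ^ r * cnj ((\<zeta> ^ (2 * t + 1)) ^ s)) = \<zeta> ^ e * (\<Sum>t<N. (\<zeta> ^ (2 * e)) ^ t)"
    by (simp add: sum_distrib_left)
  also have "\<dots> = (if r = s then of_nat N else 0)"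
  proof (cases "r = s")
    case True
    then have "e = 2 * N * s"
      using N_pos by (simp add: e_def algebra_simps)
    then have "\<zeta> ^ e = 1" "\<zeta> ^ (2 * e) = 1"
      by (simp_all add: zeta_power_eq_1_iff)
    then show ?thesis
      using True by simp
  next
    case False
    have "\<not> N dvd e"
      using N_dvd_conj_exponent_iff[OF assms] False by (simp add: e_def)
    then have "\<zeta> ^ (2 * e) \<noteq> 1"
      by (simp add: zeta_power_eq_1_iff)
    moreover have "(\<zeta> ^ (2 * e)) ^ N = 1"
      by (simp add: zeta_power_eq_1_iff flip: power_mult)
    ultimately show ?thesis
      using False by (simp add: geometric_sum)
  qed
  finally show ?thesis .
qed

lemma sum_conjugates_norm_square:
  assumes "degree p < N"
  defines "\<alpha> t \<equiv> poly (cpoly p) (\<zeta> ^ (2 * t + 1))"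
  shows "(\<Sum>t<N. \<alpha> t * cnj (\<alpha> t)) = of_nat N * of_int (\<Sum>r<N. (coeff p r)\<^sup>2)"
proof -
  define c where "c r s = complex_of_int (coeff p r * coeff p s)" for r s
  have expand: "poly (cpoly p) w * cnj (poly (cpoly p) w) = (\<Sum>r<N. \<Sum>s<N. c r s * (w ^ r * cnj (w ^ s)))" for w
    unfolding poly_cpoly_as_sum[OF assms(1)] c_def by (simp add: sum_product cnj_sum mult_ac)
  have "(\<Sum>t<N. \<alpha> t * cnj (\<alpha> t))
      = (\<Sum>t<N. \<Sum>r<N. \<Sum>s<N. c r s * ((\<zeta> ^ (2 * t + 1)) ^ r * cnj ((\<zeta> ^ (2 * t + 1)) ^ s)))"
    unfolding \<alpha>_def expand ..
  also have "\<dots> = (\<Sum>r<N. \<Sum>s<N. \<Sum>t<N. c r s * ((\<zeta> ^ (2 * t + 1)) ^ r * cnj ((\<zeta> ^ (2 * t + 1)) ^ s)))"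
    by (subst sum.swap) (rule sum.cong[OF refl], rule sum.swap)
  also have "\<dots> = (\<Sum>r<N. \<Sum>s<N. c r s * (\<Sum>t<N. (\<zeta> ^ (2 * t + 1)) ^ r * cnj ((\<zeta> ^ (2 * t + 1)) ^ s)))"
    by (simp only: sum_distrib_left)
  also have "\<dots> = (\<Sum>r<N. \<Sum>s<N. c r s * (if r = s then of_nat N else 0))"
    by (intro sum.cong refl, subst conjugate_orthogonality) auto
  also have "\<dots> = (\<Sum>r<N. c r r * of_nat N)"
    by (simp add: if_distrib sum.delta cong: if_cong)
  finally show ?thesis
    by (simp add: c_def sum_distrib_left power2_eq_square mult_ac)
qed

text \<open>\<open>p(X\<^sup>2\<^sup>N\<^sup>-\<^sup>1)\<close> is the complex conjugate of \<open>p\<close> at every root of \<open>\<Phi>\<close>, so \<open>|p|\<^sup>2 - 1\<close> is an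
  integer polynomial there and vanishes at all roots once it vanishes at \<open>\<zeta>\<close>.\<close>
lemma conjugates_unimodular:
  assumes "poly (cpoly p) \<zeta> * cnj (poly (cpoly p) \<zeta>) = 1"
  shows "poly (cpoly p) (\<zeta> ^ (2 * t + 1)) * cnj (poly (cpoly p) (\<zeta> ^ (2 * t + 1))) = 1"
proof -
  define w where "w = \<zeta> ^ (2 * t + 1)"
  define Q where "Q = p * pcompose p (monom 1 (2 * N - 1)) - 1"
  have "poly (cpoly Q) \<zeta> = 0"
    using assms cnj_poly_cpoly_zeta[of p] by (simp add: Q_def poly_cpoly_pcompose)
  moreover have "w ^ N = (\<zeta> ^ N) ^ (2 * t + 1)"
    unfolding w_def by (simp only: mult.commute flip: power_mult)
  then have "w ^ N = -1"
    by (simp add: zeta_power_N)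
  ultimately have "poly (cpoly Q) w = 0"
    by (rule root_at_all_conjugates)
  moreover have "w ^ (2 * N - 1) = cnj w"
    unfolding w_def complex_cnj_power cnj_zeta by (simp only: mult.commute flip: power_mult)
  ultimately show ?thesis
    by (simp add: Q_def poly_cpoly_pcompose poly_monom cnj_poly_cpoly w_def)
qed

lemma unimodular_cyc_int:
  assumes "\<beta> \<in> cyc_ints" and "\<beta> * cnj \<beta> = 1"
  obtains c r where "r < N" "c = 1 \<or> c = -1" "\<beta> = of_int c * \<zeta> ^ r"
proof -
  obtain p where p: "\<beta> = poly (cpoly p) \<zeta>" "degree p < N"
    using assms(1) by (rule cyc_intsE)
  define S where "S = (\<Sum>r<N. (coeff p r)\<^sup>2)"
  have "of_nat N * of_int S = (of_nat N :: complex) * 1"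
    using sum_conjugates_norm_square[OF p(2)] conjugates_unimodular assms(2) p(1) by (simp add: S_def)
  then have "(\<Sum>r<N. (coeff p r)\<^sup>2) = 1"
    using N_pos unfolding S_def[symmetric] by (simp only: mult_left_cancel of_nat_eq_0_iff of_int_eq_1_iff)
  then obtain r0 where r0: "r0 \<in> {..<N}" "coeff p r0 = 1 \<or> coeff p r0 = -1"
    and zero: "\<And>r. r \<in> {..<N} \<Longrightarrow> r \<noteq> r0 \<Longrightarrow> coeff p r = 0"
    by (rule sum_squares_eq_1_int[OF finite_lessThan]) blast
  have "\<beta> = (\<Sum>r<N. of_int (coeff p r) * \<zeta> ^ r)"
    using p by (simp add: poly_cpoly_as_sum)
  also have "\<dots> = of_int (coeff p r0) * \<zeta> ^ r0"
    using r0(1) zero by (subst sum.remove[of _ r0]) (simp_all add: sum.neutral)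
  finally show ?thesis
    using that r0 by simp
qed

lemma pi_valuation_of_norm_square:
  assumes "pi_free \<gamma>" and "\<alpha> = \<pi> ^ v * \<gamma>" and "\<alpha> * cnj \<alpha> = 2 ^ (2 * h)"
  shows "v = N * h"
proof -
  obtain \<epsilon> where \<epsilon>: "pi_free \<epsilon>" "\<pi> ^ N = 2 * \<epsilon>"
    by (rule pi_power_N)
  obtain u where u: "pi_free u" "cnj \<pi> = \<pi> * u"
    by (rule cnj_pi)
  define L where "L = u ^ v * (\<gamma> * cnj \<gamma>) * \<epsilon> ^ (2 * h)"
  have "cnj \<alpha> = cnj \<pi> ^ v * cnj \<gamma>"
    by (simp add: assms(2))
  also have "\<dots> = \<pi> ^ v * (u ^ v * cnj \<gamma>)"
    unfolding u(2) power_mult_distrib by (simp only: mult_ac)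
  finally have cnj_\<alpha>: "cnj \<alpha> = \<pi> ^ v * (u ^ v * cnj \<gamma>)" .
  have "\<pi> ^ (2 * v) = \<pi> ^ v * \<pi> ^ v"
    by (simp only: mult_2 power_add)
  then have "\<pi> ^ (2 * v) * L = (\<pi> ^ v * \<gamma>) * (\<pi> ^ v * (u ^ v * cnj \<gamma>)) * \<epsilon> ^ (2 * h)"
    by (simp add: L_def mult_ac)
  also have "\<dots> = (\<alpha> * cnj \<alpha>) * \<epsilon> ^ (2 * h)"
    by (simp only: assms(2)[symmetric] cnj_\<alpha>[symmetric])
  also have "\<dots> = \<pi> ^ (N * (2 * h))"
    by (simp add: assms(3) power_mult \<epsilon>(2) power_mult_distrib)
  finally have "2 * v = N * (2 * h)"
    by (rule pi_power_cancel[rotated])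
      (simp add: L_def u(1) assms(1) \<epsilon>(1) pi_free_mult pi_free_power pi_free_cnj)
  then show ?thesis
    by simp
qed

lemma norm_square_power_of_two:
  assumes "\<alpha> \<in> cyc_ints" and "\<alpha> * cnj \<alpha> = 2 ^ (2 * h)"
  obtains c r where "r < N" "c = 1 \<or> c = -1" "\<alpha> = 2 ^ h * (of_int c * \<zeta> ^ r)"
proof -
  have "\<alpha> \<noteq> 0"
    using assms(2) by auto
  with assms(1) obtain v \<gamma> where \<gamma>: "pi_free \<gamma>" "\<alpha> = \<pi> ^ v * \<gamma>"
    by (rule pi_adic_decomposition)
  obtain \<epsilon> where \<epsilon>: "pi_free \<epsilon>" "\<pi> ^ N = 2 * \<epsilon>"
    by (rule pi_power_N)
  have "v = N * h"
    using \<gamma> assms(2) by (rule pi_valuation_of_norm_square)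
  then have \<alpha>: "\<alpha> = 2 ^ h * (\<epsilon> ^ h * \<gamma>)"
    by (simp add: \<gamma>(2) power_mult \<epsilon>(2) power_mult_distrib)
  have "(2::complex) ^ (2 * h) = 2 ^ h * 2 ^ h"
    by (simp only: mult_2 power_add)
  then have "(2 ^ h * 2 ^ h) * ((\<epsilon> ^ h * \<gamma>) * cnj (\<epsilon> ^ h * \<gamma>)) = (2 ^ h * 2 ^ h :: complex) * 1"
    using assms(2) unfolding \<alpha> by (simp add: mult_ac)
  then have unit: "(\<epsilon> ^ h * \<gamma>) * cnj (\<epsilon> ^ h * \<gamma>) = 1"
    by (subst (asm) mult_left_cancel) simp_all
  have "\<epsilon> ^ h * \<gamma> \<in> cyc_ints"
    by (intro cyc_ints_mult cyc_ints_power pi_free_in_cyc_ints \<gamma>(1) \<epsilon>(1))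
  then obtain c r where cr: "r < N" "c = 1 \<or> c = -1" "\<epsilon> ^ h * \<gamma> = of_int c * \<zeta> ^ r"
    using unit by (rule unimodular_cyc_int)
  show ?thesis
    by (rule that[OF cr(1,2)]) (simp add: \<alpha> cr(3))
qed

lemma zeta_coeffs_unique:
  assumes "(\<Sum>r<N. of_int (d r) * \<zeta> ^ r) = (\<Sum>r<N. of_int (d' r) * \<zeta> ^ r)" and "r < N"
  shows "d r = d' r"
proof -
  define p where "p = (\<Sum>i<N. monom (d i - d' i) i)"
  have coeff_p: "coeff p i = (if i < N then d i - d' i else 0)" for i
    by (simp add: p_def coeff_sum coeff_monom)
  then have "degree p < N"
    using N_pos by (metis degree_0 leading_coeff_0_iff not_less)
  moreover have "poly (cpoly p) \<zeta> = 0"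
    using assms(1) by (simp add: poly_cpoly_as_sum[OF \<open>degree p < N\<close>] coeff_p sum_subtractf algebra_simps)
  ultimately have "p = 0"
    by (rule eq_0_of_root_of_low_degree)
  then show ?thesis
    using coeff_p[of r] assms(2) by simp
qed

end

section \<open>Walsh transforms of Boolean functions\<close>

lemma sgn_b_xor: "sgn_b (p \<noteq> q) = sgn_b p * sgn_b q"
  by (simp add: sgn_b_def)

lemma abs_sgn_b [simp]: "\<bar>sgn_b p\<bar> = 1"
  by (simp add: sgn_b_def)

lemma prod_sgn_b: "finite S \<Longrightarrow> (\<Prod>i\<in>S. sgn_b (P i)) = sgn_b (odd (card {i\<in>S. P i}))"
proof (induction S rule: finite_induct)
  case (insert x S)
  show ?case
  proof (cases "P x")
    case True
    then have "{i \<in> insert x S. P i} = insert x {i\<in>S. P i}"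
      by auto
    with insert True show ?thesis
      by (simp add: sgn_b_def)
  next
    case False
    then have "{i \<in> insert x S. P i} = {i\<in>S. P i}"
      by auto
    with insert False show ?thesis
      by (simp add: sgn_b_def)
  qed
qed (simp add: sgn_b_def)

lemma sum_Pow_prod_sgn_b:
  "finite M \<Longrightarrow> (\<Sum>S\<in>Pow M. \<Prod>i\<in>S. sgn_b (P i)) = (if \<forall>i\<in>M. \<not> P i then 2 ^ card M else 0)"
proof (induction M rule: finite_induct)
  case (insert x M)
  have "inj_on (insert x) (Pow M)" and "Pow M \<inter> insert x ` Pow M = {}"
    using insert(2) by (auto simp: inj_on_def)
  then have "(\<Sum>S\<in>Pow (insert x M). \<Prod>i\<in>S. sgn_b (P i))
      = (\<Sum>S\<in>Pow M. \<Prod>i\<in>S. sgn_b (P i)) + (\<Sum>S\<in>Pow M. \<Prod>i\<in>insert x S. sgn_b (P i))"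
    using insert(1) by (simp add: Pow_insert sum.union_disjoint sum.reindex)
  also have "(\<Sum>S\<in>Pow M. \<Prod>i\<in>insert x S. sgn_b (P i)) = sgn_b (P x) * (\<Sum>S\<in>Pow M. \<Prod>i\<in>S. sgn_b (P i))"
  proof (unfold sum_distrib_left, intro sum.cong refl)
    fix S assume "S \<in> Pow M"
    then have "finite S" "x \<notin> S"
      using insert finite_subset by auto
    then show "(\<Prod>i\<in>insert x S. sgn_b (P i)) = sgn_b (P x) * (\<Prod>i\<in>S. sgn_b (P i))"
      by simp
  qed
  finally show ?case
    using insert by (simp add: sgn_b_def)
qed simp

definition bits_to_nat :: "(nat \<Rightarrow> bool) \<Rightarrow> nat \<Rightarrow> nat" where
  "bits_to_nat b m = (\<Sum>i<m. 2 ^ i * (if b i then 1 else 0))"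

lemma bits_to_nat_less: "bits_to_nat b m < 2 ^ m"
  by (induction m) (simp_all add: bits_to_nat_def)

lemma bit_less_two_power: "(r::nat) < 2 ^ m \<Longrightarrow> bit r j \<Longrightarrow> j < m"
  by (metis bit_take_bit_iff take_bit_nat_eq_self)

lemma bit_bits_to_nat: "bit (bits_to_nat b m) j \<longleftrightarrow> j < m \<and> b j"
proof (induction m)
  case (Suc m)
  have disjoint: "\<not> bit (bits_to_nat b m) i \<or> \<not> bit ((2::nat) ^ m) i" for i
    using bit_less_two_power[OF bits_to_nat_less] by (auto simp: bit_exp_iff)
  have "bits_to_nat b (Suc m) = bits_to_nat b m + (if b m then 2 ^ m else 0)"
    by (simp add: bits_to_nat_def)
  then show ?case
    using Suc.IH by (cases "b m") (auto simp: bit_disjunctive_add_iff[OF disjoint] bit_exp_iff less_Suc_eq)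
qed (simp add: bits_to_nat_def)

lemma sign_majority:
  "sgn_b ((((p \<and> q) \<noteq> (p \<and> s)) \<noteq> (q \<and> s)) \<noteq> c) =
    (sgn_b (p \<noteq> c) + sgn_b (q \<noteq> c) + sgn_b (s \<noteq> c) - sgn_b (((p \<noteq> q) \<noteq> s) \<noteq> c)) / 2"
  by (cases p; cases q; cases s; cases c) (simp_all add: sgn_b_def)

definition walsh :: "nat \<Rightarrow> ((nat \<Rightarrow> bool) \<Rightarrow> bool) \<Rightarrow> (nat \<Rightarrow> bool) \<Rightarrow> real" where
  "walsh n g u = (\<Sum>x\<in>Vn n. sgn_b (g x \<noteq> ip n u x))"

lemma bent_iff_walsh: "bent n g \<longleftrightarrow> (\<forall>u\<in>Vn n. \<bar>walsh n g u\<bar> = 2 powr (real n / 2))"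
  by (simp add: bent_def walsh_def)

lemma walsh_majority:
  "walsh n (\<lambda>x. ((g1 x \<and> g2 x) \<noteq> (g1 x \<and> g3 x)) \<noteq> (g2 x \<and> g3 x)) u =
    (walsh n g1 u + walsh n g2 u + walsh n g3 u - walsh n (\<lambda>x. (g1 x \<noteq> g2 x) \<noteq> g3 x) u) / 2"
  unfolding walsh_def sign_majority
  by (simp add: sum_divide_distrib[symmetric] sum.distrib sum_subtractf)

text \<open>For signs \<open>a, b, c, d\<close>, \<open>(a + b + c - d) / 2\<close> is a sign exactly when \<open>d = a b c\<close>.\<close>
lemma sign_recursion_product:
  fixes w :: "nat set \<Rightarrow> real"
  assumes "finite M" and "0 < c"
    and sign: "\<And>S. S \<subseteq> M \<Longrightarrow> \<bar>w S\<bar> = c"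
    and step: "\<And>S i. S \<subseteq> M \<Longrightarrow> i \<in> M \<Longrightarrow> i \<notin> S \<Longrightarrow> \<bar>(w S + w {i} + w {} - w (insert i S)) / 2\<bar> = c"
    and "S \<subseteq> M"
  shows "w S / c = w {} / c * (\<Prod>j\<in>S. w {j} / c * (w {} / c))"
  using finite_subset[OF \<open>S \<subseteq> M\<close> \<open>finite M\<close>] \<open>S \<subseteq> M\<close>
proof (induction S rule: finite_subset_induct')
  case (insert i S)
  define sg where "sg T = w T / c" for T
  have unit: "sg T = 1 \<or> sg T = -1" if "T \<subseteq> M" for T
    using sign[OF that] \<open>0 < c\<close> by (auto simp: sg_def abs_if split: if_splits)
  have "(sg S + sg {i} + sg {} - sg (insert i S)) / 2 = ((w S + w {i} + w {} - w (insert i S)) / 2) / c"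
    by (simp add: sg_def add_divide_distrib diff_divide_distrib)
  then have "\<bar>(sg S + sg {i} + sg {} - sg (insert i S)) / 2\<bar> = 1"
    using step[OF insert.hyps(3,2,4)] \<open>0 < c\<close> by (simp add: abs_divide)
  then have "sg (insert i S) = sg S * sg {i} * sg {}"
    using unit[of S] unit[of "{i}"] unit[of "{}"] unit[of "insert i S"] insert.hyps by auto
  then show ?case
    using insert by (simp add: sg_def mult_ac)
qed simp

lemma sgn_b_xor_sum: "finite S \<Longrightarrow> sgn_b (xor_sum a S x) = (\<Prod>i\<in>S. sgn_b (a i x))"
  by (simp add: xor_sum_def prod_sgn_b)

lemma sgn_b_inject: "sgn_b p = sgn_b q \<longleftrightarrow> p = q"
  by (simp add: sgn_b_def)

lemma xor_sum_sym_diff: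
  assumes "finite S" and "finite S'"
  shows "xor_sum a (sym_diff S S') x = (xor_sum a S x \<noteq> xor_sum a S' x)"
proof -
  define p where "p X = (\<Prod>i\<in>X. sgn_b (a i x))" for X
  have "p S = p (S - S') * p (S \<inter> S')"
    unfolding p_def using assms prod.Int_Diff[of S _ S'] by (simp add: mult.commute)
  moreover have "p S' = p (S' - S) * p (S \<inter> S')"
    unfolding p_def using assms prod.Int_Diff[of S' _ S] by (simp add: mult.commute Int_commute)
  moreover have "p (sym_diff S S') = p (S - S') * p (S' - S)"
    unfolding p_def using assms by (intro prod.union_disjoint) auto
  moreover have "p (S \<inter> S') * p (S \<inter> S') = 1"
    unfolding p_def prod.distrib[symmetric] by (rule prod.neutral) (simp add: sgn_b_def)
  ultimately have "p (sym_diff S S') = p S * p S'"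
    by (simp add: mult_ac)
  then have "sgn_b (xor_sum a (sym_diff S S') x) = sgn_b (xor_sum a S x) * sgn_b (xor_sum a S' x)"
    using assms by (simp add: p_def sgn_b_xor_sum)
  then show ?thesis
    by (simp only: sgn_b_xor[symmetric] sgn_b_inject)
qed

definition bit_parity :: "nat set \<Rightarrow> nat \<Rightarrow> bool" where
  "bit_parity S r = odd (card {i\<in>S. bit r i})"

lemma sgn_b_bit_parity: "finite S \<Longrightarrow> sgn_b (bit_parity S r) = (\<Prod>i\<in>S. sgn_b (bit r i))"
  by (simp add: bit_parity_def prod_sgn_b)

lemma bit_parity_insert:
  assumes "finite S" and "i \<notin> S"
  shows "bit_parity (insert i S) r = (bit_parity S r \<noteq> bit r i)"
proof (cases "bit r i")
  case True
  then have "{j \<in> insert i S. bit r j} = insert i {j\<in>S. bit r j}"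
    by auto
  with assms True show ?thesis
    by (simp add: bit_parity_def)
next
  case False
  then have "{j \<in> insert i S. bit r j} = {j\<in>S. bit r j}"
    by auto
  with False show ?thesis
    by (simp add: bit_parity_def)
qed

lemma bit_parity_orthogonality:
  assumes "r < 2 ^ m" and "r' < 2 ^ m"
  shows "(\<Sum>S\<in>Pow {..<m}. sgn_b (bit_parity S r) * sgn_b (bit_parity S r')) = (if r = r' then 2 ^ m else 0)"
proof -
  have "(\<Sum>S\<in>Pow {..<m}. sgn_b (bit_parity S r) * sgn_b (bit_parity S r'))
      = (\<Sum>S\<in>Pow {..<m}. \<Prod>i\<in>S. sgn_b (bit r i \<noteq> bit r' i))"
  proof (intro sum.cong refl)
    fix S assume "S \<in> Pow {..<m}"
    then have "finite S"
      by (auto intro: finite_subset)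
    then show "sgn_b (bit_parity S r) * sgn_b (bit_parity S r') = (\<Prod>i\<in>S. sgn_b (bit r i \<noteq> bit r' i))"
      unfolding sgn_b_xor prod.distrib sgn_b_bit_parity[OF \<open>finite S\<close>] by simp
  qed
  also have "\<dots> = (if \<forall>i\<in>{..<m}. bit r i = bit r' i then 2 ^ m else 0)"
    by (simp add: sum_Pow_prod_sgn_b)
  also have "(\<forall>i\<in>{..<m}. bit r i = bit r' i) \<longleftrightarrow> r = r'"
    using assms by (auto intro: bit_eqI dest: bit_less_two_power)
  finally show ?thesis .
qed

lemma product_signs_eq_character:
  fixes sg :: "nat set \<Rightarrow> real"
  assumes product: "\<And>S. S \<subseteq> {..<m} \<Longrightarrow> sg S = sg {} * (\<Prod>j\<in>S. sg {j} * sg {})"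
    and sign: "\<And>j. j < m \<Longrightarrow> sg {j} * sg {} = 1 \<or> sg {j} * sg {} = -1"
  shows "\<exists>\<beta> < 2 ^ m. \<forall>S \<subseteq> {..<m}. sg S = sg {} * sgn_b (bit_parity S \<beta>)"
proof (intro exI conjI allI impI)
  define \<beta> where "\<beta> = bits_to_nat (\<lambda>j. sg {j} * sg {} = -1) m"
  show "\<beta> < 2 ^ m"
    by (simp add: \<beta>_def bits_to_nat_less)
  have bits: "sg {j} * sg {} = sgn_b (bit \<beta> j)" if "j < m" for j
    using sign[OF that] that by (auto simp: \<beta>_def bit_bits_to_nat sgn_b_def)
  fix S :: "nat set" assume "S \<subseteq> {..<m}"
  then have "finite S"
    by (rule finite_subset) simp
  moreover have "(\<Prod>j\<in>S. sg {j} * sg {}) = (\<Prod>j\<in>S. sgn_b (bit \<beta> j))"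
    using \<open>S \<subseteq> {..<m}\<close> bits by (intro prod.cong) auto
  ultimately show "sg S = sg {} * sgn_b (bit_parity S \<beta>)"
    by (simp add: product[OF \<open>S \<subseteq> {..<m}\<close>] sgn_b_bit_parity)
qed

section \<open>Generalized bent functions\<close>

text \<open>Here \<open>f = level + N a\<^sub>m\<close>, so \<open>gwalsh\<close> is the generalized Walsh transform of \<open>f\<close>, and
  \<open>fibre_walsh r\<close> is the Walsh sum of \<open>a\<^sub>m\<close> over the fibre \<open>level = r\<close>.\<close>
locale gbent_setting = two_power_cyclotomic m for m +
  fixes n :: nat and a :: "nat \<Rightarrow> (nat \<Rightarrow> bool) \<Rightarrow> bool"
begin

definition level :: "(nat \<Rightarrow> bool) \<Rightarrow> nat" where
  "level x = bits_to_nat (\<lambda>i. a i x) m"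

definition sgn_am :: "(nat \<Rightarrow> bool) \<Rightarrow> (nat \<Rightarrow> bool) \<Rightarrow> int" where
  "sgn_am u x = (if a m x \<noteq> ip n u x then -1 else 1)"

definition fibre_walsh :: "nat \<Rightarrow> (nat \<Rightarrow> bool) \<Rightarrow> int" where
  "fibre_walsh r u = (\<Sum>x\<in>Vn n. if level x = r then sgn_am u x else 0)"

definition gwalsh :: "(nat \<Rightarrow> bool) \<Rightarrow> complex" where
  "gwalsh u = (\<Sum>x\<in>Vn n. \<zeta> ^ (level x + N * (if a m x then 1 else 0)) * complex_of_real (sgn_b (ip n u x)))"

definition level_fn :: "(nat \<Rightarrow> bool) \<Rightarrow> (nat \<Rightarrow> bool) \<Rightarrow> bool" where
  "level_fn h x = (a m x \<noteq> h (level x))"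

lemma level_less_N: "level x < N"
  by (simp add: level_def N_def bits_to_nat_less)

lemma bit_level: "i < m \<Longrightarrow> bit (level x) i = a i x"
  by (simp add: level_def bit_bits_to_nat)

lemma sum_by_level:
  fixes g :: "nat \<Rightarrow> 'b::comm_ring_1"
  shows "(\<Sum>x\<in>Vn n. g (level x) * of_int (sgn_am u x)) = (\<Sum>r<N. g r * of_int (fibre_walsh r u))"
proof -
  have "(\<Sum>x\<in>Vn n. g (level x) * of_int (sgn_am u x))
      = (\<Sum>x\<in>Vn n. \<Sum>r<N. if level x = r then g r * of_int (sgn_am u x) else 0)"
    using level_less_N by (intro sum.cong refl) (simp add: sum.delta)
  also have "\<dots> = (\<Sum>r<N. \<Sum>x\<in>Vn n. if level x = r then g r * of_int (sgn_am u x) else 0)"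
    by (rule sum.swap)
  also have "\<dots> = (\<Sum>r<N. g r * of_int (fibre_walsh r u))"
    by (simp add: fibre_walsh_def of_int_sum sum_distrib_left if_distrib cong: if_cong)
  finally show ?thesis .
qed

lemma gwalsh_eq: "gwalsh u = (\<Sum>r<N. of_int (fibre_walsh r u) * \<zeta> ^ r)"
proof -
  have "gwalsh u = (\<Sum>x\<in>Vn n. \<zeta> ^ level x * of_int (sgn_am u x))"
    unfolding gwalsh_def
    by (intro sum.cong refl) (simp add: sgn_am_def sgn_b_def power_add zeta_power_N)
  also have "\<dots> = (\<Sum>r<N. \<zeta> ^ r * of_int (fibre_walsh r u))"
    by (rule sum_by_level)
  finally show ?thesis
    by (simp add: mult.commute)
qed

lemma walsh_level_fn: "walsh n (level_fn h) u = (\<Sum>r<N. sgn_b (h r) * of_int (fibre_walsh r u))"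
proof -
  have "walsh n (level_fn h) u = (\<Sum>x\<in>Vn n. sgn_b (h (level x)) * of_int (sgn_am u x))"
    unfolding walsh_def level_fn_def by (intro sum.cong refl) (simp add: sgn_am_def sgn_b_def)
  also have "\<dots> = (\<Sum>r<N. sgn_b (h r) * of_int (fibre_walsh r u))"
    by (rule sum_by_level)
  finally show ?thesis .
qed

lemma gwalsh_in_cyc_ints: "gwalsh u \<in> cyc_ints"
  unfolding gwalsh_eq by (intro cyc_ints_sum cyc_ints_mult cyc_ints_of_int cyc_ints_power cyc_ints_zeta)

lemma fibre_walsh_of_gwalsh_norm:
  assumes "cmod (gwalsh u) = 2 ^ h"
  obtains c r0 where "r0 < N" "c = 1 \<or> c = -1" "\<And>r. r < N \<Longrightarrow> fibre_walsh r u = (if r = r0 then 2 ^ h * c else 0)"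
proof -
  have "gwalsh u * cnj (gwalsh u) = complex_of_real ((2 ^ h)\<^sup>2)"
    using assms by (simp flip: complex_norm_square)
  then have "gwalsh u * cnj (gwalsh u) = 2 ^ (2 * h)"
    by (simp add: power_mult mult.commute)
  with gwalsh_in_cyc_ints obtain c r0 where cr: "r0 < N" "c = 1 \<or> c = -1" "gwalsh u = 2 ^ h * (of_int c * \<zeta> ^ r0)"
    by (rule norm_square_power_of_two)
  define d where "d r = (if r = r0 then 2 ^ h * c else 0)" for r
  have "(\<Sum>r<N. of_int (d r) * \<zeta> ^ r) = (\<Sum>r<N. if r = r0 then 2 ^ h * (of_int c * \<zeta> ^ r) else 0)"
    by (intro sum.cong refl) (simp add: d_def)
  also have "\<dots> = 2 ^ h * (of_int c * \<zeta> ^ r0)"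
    using cr(1) by (simp add: sum.delta')
  finally have "(\<Sum>r<N. of_int (d r) * \<zeta> ^ r) = 2 ^ h * (of_int c * \<zeta> ^ r0)" .
  then have "(\<Sum>r<N. of_int (fibre_walsh r u) * \<zeta> ^ r) = (\<Sum>r<N. of_int (d r) * \<zeta> ^ r)"
    using cr(3) by (simp add: gwalsh_eq)
  then have "fibre_walsh r u = d r" if "r < N" for r
    using that by (rule zeta_coeffs_unique)
  then show ?thesis
    using that cr(1,2) by (simp add: d_def)
qed

lemma bent_level_fn_of_gbent:
  assumes "n = 2 * h" and "\<forall>u\<in>Vn n. cmod (gwalsh u) = 2 ^ h"
  shows "bent n (level_fn g)"
  unfolding bent_iff_walsh
proof
  fix u assume "u \<in> Vn n"
  then obtain c r0 where cr: "r0 < N" "c = 1 \<or> c = -1" "\<And>r. r < N \<Longrightarrow> fibre_walsh r u = (if r = r0 then 2 ^ h * c else 0)"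
    using assms(2) fibre_walsh_of_gwalsh_norm by blast
  have "walsh n (level_fn g) u = (\<Sum>r<N. if r = r0 then sgn_b (g r) * (2 ^ h * of_int c) else 0)"
    unfolding walsh_level_fn using cr(3) by (intro sum.cong refl) simp
  also have "\<dots> = sgn_b (g r0) * (2 ^ h * of_int c)"
    using cr(1) by (simp add: sum.delta')
  finally show "\<bar>walsh n (level_fn g) u\<bar> = 2 powr (real n / 2)"
    using cr(2) assms(1) by (auto simp: abs_mult powr_realpow)
qed

lemma xor_sum_eq_bit_parity_level: "S \<subseteq> {..<m} \<Longrightarrow> xor_sum a S x = bit_parity S (level x)"
proof -
  assume "S \<subseteq> {..<m}"
  then have "{i\<in>S. bit (level x) i} = {i\<in>S. a i x}"
    using bit_level by auto
  then show ?thesis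
    by (simp add: xor_sum_def bit_parity_def)
qed

lemma aff_space_eq: "aff_space (a m) a m = (\<lambda>S. level_fn (bit_parity S)) ` Pow {..<m}"
proof -
  have "aff_space (a m) a m = (\<lambda>S x. a m x \<noteq> xor_sum a S x) ` Pow {..<m}"
    unfolding aff_space_def by auto
  also have "\<dots> = (\<lambda>S. level_fn (bit_parity S)) ` Pow {..<m}"
    by (intro image_cong refl) (auto simp: level_fn_def fun_eq_iff xor_sum_eq_bit_parity_level)
  finally show ?thesis .
qed

lemma level_fn_majority:
  "(\<lambda>x. ((level_fn h1 x \<and> level_fn h2 x) \<noteq> (level_fn h1 x \<and> level_fn h3 x)) \<noteq> (level_fn h2 x \<and> level_fn h3 x))
    = level_fn (\<lambda>r. ((h1 r \<and> h2 r) \<noteq> (h1 r \<and> h3 r)) \<noteq> (h2 r \<and> h3 r))"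
  by (auto simp: level_fn_def fun_eq_iff)

lemma level_fn_parity_xor:
  assumes "finite S" and "i \<notin> S"
  shows "(\<lambda>x. (level_fn (bit_parity S) x \<noteq> level_fn (bit_parity {i}) x) \<noteq> level_fn (bit_parity {}) x)
    = level_fn (bit_parity (insert i S))"
  using assms by (auto simp: level_fn_def fun_eq_iff bit_parity_insert)

lemma card_aff_space:
  assumes "lin_indep_bool n a m"
  shows "card ((\<lambda>g. restrict g (Vn n)) ` aff_space (a m) a m) = 2 ^ m"
proof -
  have indep: "\<And>T. T \<subseteq> {..<m} \<Longrightarrow> (\<And>x. x \<in> Vn n \<Longrightarrow> \<not> xor_sum a T x) \<Longrightarrow> T = {}"
    using assms unfolding lin_indep_bool_def by blast
  have "inj_on (\<lambda>S. restrict (level_fn (bit_parity S)) (Vn n)) (Pow {..<m})"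
  proof (rule inj_onI)
    fix S S' assume S: "S \<in> Pow {..<m}" and S': "S' \<in> Pow {..<m}"
      and eq: "restrict (level_fn (bit_parity S)) (Vn n) = restrict (level_fn (bit_parity S')) (Vn n)"
    have fin: "finite S" "finite S'"
      using S S' finite_subset by auto
    have "sym_diff S S' \<subseteq> {..<m}"
      using S S' by auto
    moreover have "\<not> xor_sum a (sym_diff S S') x" if "x \<in> Vn n" for x
    proof -
      have "bit_parity S (level x) = bit_parity S' (level x)"
        using fun_cong[OF eq, of x] that by (auto simp: level_fn_def)
      then show ?thesis
        using S S' by (simp add: xor_sum_sym_diff[OF fin] xor_sum_eq_bit_parity_level)
    qed
    ultimately have "sym_diff S S' = {}"
      by (rule indep)
    then show "S = S'"
      by auto
  qed
  then show ?thesis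
    by (simp add: aff_space_eq image_image card_image card_Pow)
qed

lemma fibre_walsh_of_walsh_parity:
  assumes walsh: "\<And>S. S \<subseteq> {..<m} \<Longrightarrow> walsh n (level_fn (bit_parity S)) u = c * sgn_b (bit_parity S \<beta>)"
    and "\<beta> < N" and "r < N"
  shows "of_int (fibre_walsh r u) = (if r = \<beta> then c else 0)"
proof -
  let ?\<chi> = "\<lambda>S r. sgn_b (bit_parity S r)"
  have "(\<Sum>S\<in>Pow {..<m}. ?\<chi> S r * walsh n (level_fn (bit_parity S)) u)
      = (\<Sum>S\<in>Pow {..<m}. \<Sum>r'<N. of_int (fibre_walsh r' u) * (?\<chi> S r * ?\<chi> S r'))"
    by (intro sum.cong refl) (simp add: walsh_level_fn sum_distrib_left mult_ac)
  also have "\<dots> = (\<Sum>r'<N. of_int (fibre_walsh r' u) * (\<Sum>S\<in>Pow {..<m}. ?\<chi> S r * ?\<chi> S r'))"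
    by (subst sum.swap) (simp add: sum_distrib_left)
  also have "\<dots> = (\<Sum>r'<N. if r = r' then of_int (fibre_walsh r' u) * real N else 0)"
    using assms(3) by (intro sum.cong refl) (simp add: bit_parity_orthogonality N_def)
  also have "\<dots> = of_int (fibre_walsh r u) * real N"
    using assms(3) by simp
  finally have "of_int (fibre_walsh r u) * real N = (\<Sum>S\<in>Pow {..<m}. ?\<chi> S r * walsh n (level_fn (bit_parity S)) u)" ..
  also have "\<dots> = c * (\<Sum>S\<in>Pow {..<m}. ?\<chi> S r * ?\<chi> S \<beta>)"
    by (simp add: walsh sum_distrib_left mult_ac)
  also have "\<dots> = c * (if r = \<beta> then real N else 0)"
    using assms(2,3) by (simp add: bit_parity_orthogonality N_def)
  finally show ?thesis
    using N_pos by (auto split: if_splits)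
qed

lemma walsh_parity_signs:
  assumes bent: "\<And>S. S \<subseteq> {..<m} \<Longrightarrow> \<bar>walsh n (level_fn (bit_parity S)) u\<bar> = 2 ^ h"
    and majority_bent: "\<And>S i. S \<subseteq> {..<m} \<Longrightarrow> i < m \<Longrightarrow> i \<notin> S \<Longrightarrow>
      \<bar>walsh n (\<lambda>x. ((level_fn (bit_parity S) x \<and> level_fn (bit_parity {i}) x)
          \<noteq> (level_fn (bit_parity S) x \<and> level_fn (bit_parity {}) x))
          \<noteq> (level_fn (bit_parity {i}) x \<and> level_fn (bit_parity {}) x)) u\<bar> = 2 ^ h"
  obtains \<epsilon> \<beta> where "\<epsilon> = 1 \<or> \<epsilon> = -1" "\<beta> < N"
    "\<And>S. S \<subseteq> {..<m} \<Longrightarrow> walsh n (level_fn (bit_parity S)) u = 2 ^ h * \<epsilon> * sgn_b (bit_parity S \<beta>)"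
proof -
  define sg where "sg S = walsh n (level_fn (bit_parity S)) u / 2 ^ h" for S
  have sign: "sg S = 1 \<or> sg S = -1" if "S \<subseteq> {..<m}" for S
  proof -
    have "\<bar>sg S\<bar> = 1"
      by (simp add: sg_def abs_divide bent[OF that])
    then show ?thesis
      by linarith
  qed
  have "\<bar>(walsh n (level_fn (bit_parity S)) u + walsh n (level_fn (bit_parity {i})) u
      + walsh n (level_fn (bit_parity {})) u - walsh n (level_fn (bit_parity (insert i S))) u) / 2\<bar> = 2 ^ h"
    if "S \<subseteq> {..<m}" "i \<in> {..<m}" "i \<notin> S" for S i
  proof -
    have "finite S"
      using that(1) by (rule finite_subset) simp
    then show ?thesis
      using majority_bent[of S i] that
      unfolding walsh_majority level_fn_parity_xor[OF \<open>finite S\<close> that(3)] by simp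
  qed
  then have "sg S = sg {} * (\<Prod>j\<in>S. sg {j} * sg {})" if "S \<subseteq> {..<m}" for S
    unfolding sg_def using bent that by (intro sign_recursion_product[of "{..<m}"]) auto
  moreover have "sg {j} * sg {} = 1 \<or> sg {j} * sg {} = -1" if "j < m" for j
    using sign[of "{j}"] sign[of "{}"] that by auto
  ultimately obtain \<beta> where "\<beta> < 2 ^ m" and sg: "\<And>S. S \<subseteq> {..<m} \<Longrightarrow> sg S = sg {} * sgn_b (bit_parity S \<beta>)"
    using product_signs_eq_character by blast
  then have "\<beta> < N"
    by (simp add: N_def)
  moreover have "walsh n (level_fn (bit_parity S)) u = 2 ^ h * sg {} * sgn_b (bit_parity S \<beta>)"
    if "S \<subseteq> {..<m}" for S
    using sg[OF that] by (simp add: sg_def)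
  ultimately show ?thesis
    using sign[of "{}"] that by blast
qed

lemma gwalsh_norm_of_walsh_parity:
  assumes "\<epsilon> = 1 \<or> \<epsilon> = -1" and "\<beta> < N"
    and "\<And>S. S \<subseteq> {..<m} \<Longrightarrow> walsh n (level_fn (bit_parity S)) u = 2 ^ h * \<epsilon> * sgn_b (bit_parity S \<beta>)"
  shows "cmod (gwalsh u) = 2 ^ h"
proof -
  have fibre: "of_int (fibre_walsh r u) = (if r = \<beta> then 2 ^ h * \<epsilon> else 0)" if "r < N" for r
    using fibre_walsh_of_walsh_parity[where c = "2 ^ h * \<epsilon>" and \<beta> = \<beta>] assms(2,3) that by simp
  have "gwalsh u = (\<Sum>r<N. complex_of_real (of_int (fibre_walsh r u)) * \<zeta> ^ r)"
    by (simp add: gwalsh_eq)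
  also have "\<dots> = (\<Sum>r<N. if r = \<beta> then complex_of_real (2 ^ h * \<epsilon>) * \<zeta> ^ r else 0)"
    by (intro sum.cong refl) (simp add: fibre)
  also have "\<dots> = complex_of_real (2 ^ h * \<epsilon>) * \<zeta> ^ \<beta>"
    using assms(2) by (simp add: sum.delta')
  finally show ?thesis
    using assms(1) by (auto simp: norm_mult norm_power)
qed

lemma gbent_iff_gwalsh:
  assumes "n = 2 * h" and f: "\<And>x. f x = (\<Sum>i<Suc m. 2 ^ i * (if a i x then 1 else 0))"
  shows "gbent n (Suc m) f \<longleftrightarrow> (\<forall>u\<in>Vn n. cmod (gwalsh u) = 2 ^ h)"
proof -
  have "cis (2 * pi * real (f x) / 2 ^ Suc m) = \<zeta> ^ (level x + N * (if a m x then 1 else 0))" for x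
  proof -
    define e where "e = level x + N * (if a m x then 1 else 0)"
    have "\<zeta> ^ e = cis (real e * (pi / 2 ^ m))"
      unfolding \<zeta>_def by (rule Complex.DeMoivre)
    also have "real e * (pi / 2 ^ m) = 2 * pi * real e / 2 ^ Suc m"
      by (simp add: field_simps)
    finally have "\<zeta> ^ e = cis (2 * pi * real e / 2 ^ Suc m)" .
    moreover have "f x = e"
      by (simp add: f e_def level_def bits_to_nat_def N_def)
    ultimately show ?thesis
      unfolding e_def by simp
  qed
  moreover have "2 powr (real n / 2) = (2::real) ^ h"
    using assms(1) by (simp add: powr_realpow)
  ultimately show ?thesis
    unfolding gbent_def gwalsh_def by simp
qed

lemma aff_space_bent_of_gbent:
  assumes "n = 2 * h" and "\<forall>u\<in>Vn n. cmod (gwalsh u) = 2 ^ h"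
  shows "\<forall>g\<in>aff_space (a m) a m. bent n g"
    and "\<forall>gi\<in>aff_space (a m) a m. \<forall>gj\<in>aff_space (a m) a m. \<forall>gl\<in>aff_space (a m) a m.
          bent n (\<lambda>x. ((gi x \<and> gj x) \<noteq> (gi x \<and> gl x)) \<noteq> (gj x \<and> gl x))"
proof -
  have level_fns: "\<exists>h. g = level_fn h" if "g \<in> aff_space (a m) a m" for g
    using that by (auto simp: aff_space_eq)
  show "\<forall>g\<in>aff_space (a m) a m. bent n g"
    using level_fns bent_level_fn_of_gbent[OF assms] by blast
  show "\<forall>gi\<in>aff_space (a m) a m. \<forall>gj\<in>aff_space (a m) a m. \<forall>gl\<in>aff_space (a m) a m.
          bent n (\<lambda>x. ((gi x \<and> gj x) \<noteq> (gi x \<and> gl x)) \<noteq> (gj x \<and> gl x))"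
  proof (intro ballI)
    fix gi gj gl assume "gi \<in> aff_space (a m) a m" "gj \<in> aff_space (a m) a m" "gl \<in> aff_space (a m) a m"
    then obtain h1 h2 h3 where "gi = level_fn h1" "gj = level_fn h2" "gl = level_fn h3"
      using level_fns by meson
    then show "bent n (\<lambda>x. ((gi x \<and> gj x) \<noteq> (gi x \<and> gl x)) \<noteq> (gj x \<and> gl x))"
      by (simp only: level_fn_majority bent_level_fn_of_gbent[OF assms])
  qed
qed

lemma gbent_of_aff_space_bent:
  assumes "n = 2 * h"
    and bent: "\<forall>g\<in>aff_space (a m) a m. bent n g"
    and majority_bent: "\<forall>gi\<in>aff_space (a m) a m. \<forall>gj\<in>aff_space (a m) a m. \<forall>gl\<in>aff_space (a m) a m.
          bent n (\<lambda>x. ((gi x \<and> gj x) \<noteq> (gi x \<and> gl x)) \<noteq> (gj x \<and> gl x))"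
  shows "\<forall>u\<in>Vn n. cmod (gwalsh u) = 2 ^ h"
proof
  fix u assume "u \<in> Vn n"
  then have walsh: "\<bar>walsh n g u\<bar> = 2 ^ h" if "bent n g" for g
    using that assms(1) by (simp add: bent_iff_walsh powr_realpow)
  have parity_fn: "level_fn (bit_parity S) \<in> aff_space (a m) a m" if "S \<subseteq> {..<m}" for S
    using that by (simp add: aff_space_eq)
  obtain \<epsilon> \<beta> where "\<epsilon> = 1 \<or> \<epsilon> = -1" "\<beta> < N"
    "\<And>S. S \<subseteq> {..<m} \<Longrightarrow> walsh n (level_fn (bit_parity S)) u = 2 ^ h * \<epsilon> * sgn_b (bit_parity S \<beta>)"
  proof (rule walsh_parity_signs)
    show "\<bar>walsh n (level_fn (bit_parity S)) u\<bar> = 2 ^ h" if "S \<subseteq> {..<m}" for S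
      using walsh bent parity_fn[OF that] by blast
    show "\<bar>walsh n (\<lambda>x. ((level_fn (bit_parity S) x \<and> level_fn (bit_parity {i}) x)
          \<noteq> (level_fn (bit_parity S) x \<and> level_fn (bit_parity {}) x))
          \<noteq> (level_fn (bit_parity {i}) x \<and> level_fn (bit_parity {}) x)) u\<bar> = 2 ^ h"
      if "S \<subseteq> {..<m}" "i < m" for S i
      using walsh majority_bent parity_fn[OF that(1)] parity_fn[of "{i}"] parity_fn[of "{}"] that(2) by simp
  qed blast
  then show "cmod (gwalsh u) = 2 ^ h"
    by (rule gwalsh_norm_of_walsh_parity)
qed

end

theorem theorem2:
  fixes n k :: nat and a :: "nat \<Rightarrow> (nat \<Rightarrow> bool) \<Rightarrow> bool"
    and f :: "(nat \<Rightarrow> bool) \<Rightarrow> nat"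
  assumes "even n" and "k \<ge> 2"
    and "\<And>x. f x = (\<Sum>i<k. 2 ^ i * (if a i x then 1 else 0))"
    and "lin_indep_bool n a (k - 1)"
  shows "gbent n k f \<longleftrightarrow>
    (let A = aff_space (a (k - 1)) a (k - 1) in
       card ((\<lambda>g. restrict g (Vn n)) ` A) = 2 ^ (k - 1)
     \<and> (\<forall>g\<in>A. bent n g)
     \<and> (\<forall>gi\<in>A. \<forall>gj\<in>A. \<forall>gl\<in>A.
          bent n (\<lambda>x. ((gi x \<and> gj x) \<noteq> (gi x \<and> gl x)) \<noteq> (gj x \<and> gl x))))"
proof -
  define m where "m = k - 1"
  interpret gbent_setting m n a .
  obtain h where h: "n = 2 * h"
    using assms(1) by blast
  have k: "k = Suc m"
    using assms(2) by (simp add: m_def)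
  have gbent: "gbent n k f \<longleftrightarrow> (\<forall>u\<in>Vn n. cmod (gwalsh u) = 2 ^ h)"
    unfolding k using h assms(3) by (intro gbent_iff_gwalsh) (simp_all add: k)
  have "card ((\<lambda>g. restrict g (Vn n)) ` aff_space (a m) a m) = 2 ^ m"
    using assms(4) by (intro card_aff_space) (simp add: m_def)
  then show ?thesis
    unfolding Let_def m_def[symmetric] gbent
    using aff_space_bent_of_gbent[OF h] gbent_of_aff_space_bent[OF h] by blast
qed

end
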